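(* Let $n=2k$ and let $r$ be an integer with $1<r<k$ and $\gcd(r,k)=1$. Then $G(x)=\sum_{i=1}^{2^r-1}x^{(i2^{k-r}+1)(2^k-1)+1}$ takes all its values in $\mathbb{F}_{2^k}$, and as an $(n,k)$-function $G:\mathbb{F}_{2^n}\to\mathbb{F}_{2^k}$ it is vectorial bent.
   Context: An $(n,k)$-function $G$ is vectorial bent if for every $\lambda\in\mathbb{F}_{2^k}^*$ the Boolean function $\mathrm{Tr}^k_1(\lambda G(x))$ is bent, i.e. $|\sum_{x\in\mathbb{F}_{2^n}}(-1)^{\mathrm{Tr}^k_1(\lambda G(x))+\mathrm{Tr}^n_1(ax)}|=2^{k}$ for all $a\in\mathbb{F}_{2^n}$, where $\mathrm{Tr}^m_1(x)=\sum_{i=0}^{m-1}x^{2^i}$. *)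

theory Defs
  imports Main
begin

definition tr :: "nat \<Rightarrow> 'a::field \<Rightarrow> 'a" where
  "tr m x = (\<Sum>i<m. x ^ (2 ^ i))"

text \<open>Additive character: (-1)^y for y in F_2 (0 maps to 1, anything else to -1).\<close>
definition sgn2 :: "'a::field \<Rightarrow> int" where
  "sgn2 y = (if y = 0 then 1 else -1)"

definition in_subfield :: "nat \<Rightarrow> 'a::field \<Rightarrow> bool" where
  "in_subfield k y \<longleftrightarrow> y ^ (2 ^ k) = y"

text \<open>Vectorial bentness of an (n,k)-function G : F_{2^n} -> F_{2^k}, where F_{2^n} is the
  finite field type 'a and F_{2^k} is its subfield of elements fixed by x |-> x^(2^k).\<close>
definition vectorial_bent :: "nat \<Rightarrow> nat \<Rightarrow> ('a::{field,finite} \<Rightarrow> 'a) \<Rightarrow> bool" where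
  "vectorial_bent n k G \<longleftrightarrow>
     (\<forall>l. in_subfield k l \<and> l \<noteq> 0 \<longrightarrow>
        (\<forall>a::'a. \<bar>\<Sum>x\<in>UNIV. sgn2 (tr k (l * G x) + tr n (a * x))\<bar> = 2 ^ k))"

end

theory Submission
  imports Defs "HOL-Computational_Algebra.Polynomial"
begin

(*
  Write q = 2^k, m = 2^(k-r), K = F_q and T x = x + x^q for the relative trace from F_(q^2)
  to K. Summing the geometric series hidden in G gives G x * T (x^m) = T (x^(m+1)), so G is
  K-valued and K-homogeneous, and on an affine line z + gamma (z in K, gamma not in K)
  T (gamma^m) * G (z + gamma) is an affine linearized polynomial C z + D z^m + E with
  coefficients in K. Every component function tr_k (l G x) + tr_n (a x) equals tr_k (c x) for a
  K-valued K-homogeneous c, and summing the character over the q + 1 lines through the origin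
  gives the Walsh value q (N - 1), where N counts the lines on which c vanishes. Because
  gcd (k - r, k) = 1, z |-> z^(m-1) permutes the nonzero elements of K; hence the kernel of
  C z + D z^m has one element when C = 0 and two otherwise, which forces N to be 0 or 2 and the
  Walsh value to be q in absolute value.
*)

section \<open>Characteristic 2\<close>

lemma CHAR_eq_2_if_card_power2:
  assumes "card (UNIV :: 'a::{field,finite} set) = 2 ^ n"
  shows "CHAR('a) = 2"
proof -
  have "(\<Sum>y\<in>UNIV. y + 1) = (\<Sum>y\<in>UNIV. y :: 'a)"
    by (rule sum.reindex_bij_witness[of _ "\<lambda>y. y - 1" "\<lambda>y. y + 1"]) auto
  then have "(2 :: 'a) ^ n = 0"
    by (simp add: sum.distrib assms)
  then have "CHAR('a) dvd 2"
    using of_nat_eq_0_iff_char_dvd[where 'a = 'a, of 2] by simp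
  then have "CHAR('a) \<noteq> 0"
    by (metis dvd_0_left zero_neq_numeral)
  moreover have "CHAR('a) \<le> 2"
    using \<open>CHAR('a) dvd 2\<close> by (rule dvd_imp_le) simp
  ultimately show ?thesis
    using CHAR_not_1[where 'a = 'a] by linarith
qed

lemma power_card_UNIV_eq_self:
  fixes x :: "'a::{field,finite}"
  shows "x ^ card (UNIV :: 'a set) = x"
proof (cases "x = 0")
  case False
  let ?U = "UNIV - {0 :: 'a}"
  have "x ^ card ?U * (\<Prod>y\<in>?U. y) = (\<Prod>y\<in>?U. x * y)"
    by (simp only: prod.distrib prod_constant)
  also have "\<dots> = (\<Prod>y\<in>?U. y)"
    by (rule prod.reindex_bij_witness[of _ "\<lambda>y. y / x" "\<lambda>y. x * y"]) (use False in auto)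
  finally have "x ^ card ?U = 1"
    by simp
  moreover have "card (UNIV :: 'a set) = Suc (card ?U)"
    using finite_UNIV_card_ge_0[where 'a = 'a] by (simp add: card_Diff_singleton)
  ultimately show ?thesis
    by (simp only: power_Suc mult_1_right)
qed (simp add: finite_UNIV_card_ge_0)

lemma char2_add_self:
  assumes "CHAR('a::ring_1) = 2"
  shows "(x :: 'a) + x = 0"
  using uminus_CHAR_2[OF assms, of x] by (simp add: add_eq_0_iff2)

lemma char2_add_eq_0_iff:
  assumes "CHAR('a::ring_1) = 2"
  shows "(x :: 'a) + y = 0 \<longleftrightarrow> x = y"
  using uminus_CHAR_2[OF assms, of y] by (simp add: add_eq_0_iff2)

lemma char2_of_nat_odd:
  assumes "CHAR('a::ring_1) = 2" and "odd n"
  shows "of_nat n = (1 :: 'a)"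
proof -
  obtain j where "n = Suc (2 * j)"
    using assms(2) by (auto elim: oddE)
  moreover have "(2 :: 'a) = 0"
    using of_nat_CHAR[where 'a = 'a] assms(1) by simp
  ultimately show ?thesis
    by simp
qed

lemma char2_geometric_sum:
  assumes "CHAR('a::comm_ring_1) = 2"
  shows "(1 + w) * (\<Sum>i=1..n. w ^ i) = w + (w :: 'a) ^ Suc n"
proof (induction n)
  case 0
  then show ?case
    using char2_add_self[OF assms, of w] by simp
next
  case (Suc n)
  have "(1 + w) * (\<Sum>i=1..Suc n. w ^ i) = (1 + w) * (\<Sum>i=1..n. w ^ i) + (1 + w) * w ^ Suc n"
    by (simp add: distrib_left)
  also have "\<dots> = w + w ^ Suc n + (1 + w) * w ^ Suc n"
    by (simp only: Suc)
  also have "\<dots> = w + w ^ Suc (Suc n)"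
    using char2_add_self[OF assms, of "w ^ Suc n"] by (simp add: algebra_simps)
  finally show ?case .
qed

lemma frobenius_add:
  assumes "CHAR('a::comm_semiring_1) = 2"
  shows "((x :: 'a) + y) ^ 2 ^ j = x ^ 2 ^ j + y ^ 2 ^ j"
  by (rule freshmans_dream') (simp_all add: assms)

lemma frobenius_inj:
  assumes "CHAR('a::field) = 2" and "(x :: 'a) ^ 2 ^ j = y ^ 2 ^ j"
  shows "x = y"
proof -
  have "(x + y) ^ 2 ^ j = 0"
    using assms by (simp add: frobenius_add char2_add_self)
  then show ?thesis
    using assms(1) by (simp add: char2_add_eq_0_iff)
qed

section \<open>Subfields\<close>

lemma in_subfield_0 [simp]: "in_subfield k 0"
  by (simp add: in_subfield_def)

lemma in_subfield_of_card:
  assumes "card (UNIV :: 'a::{field,finite} set) = 2 ^ n"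
  shows "in_subfield n (x :: 'a)"
  using power_card_UNIV_eq_self[of x] assms by (simp add: in_subfield_def)

lemma in_subfield_add:
  assumes "CHAR('a::field) = 2" and "in_subfield k (x :: 'a)" and "in_subfield k y"
  shows "in_subfield k (x + y)"
  using assms by (simp add: in_subfield_def frobenius_add)

lemma in_subfield_mult:
  "in_subfield k x \<Longrightarrow> in_subfield k y \<Longrightarrow> in_subfield k (x * y)"
  by (simp add: in_subfield_def power_mult_distrib)

lemma in_subfield_divide:
  "in_subfield k x \<Longrightarrow> in_subfield k y \<Longrightarrow> in_subfield k (x / y)"
  by (simp add: in_subfield_def power_divide)

lemma in_subfield_power:
  "in_subfield k x \<Longrightarrow> in_subfield k (x ^ e)"
  unfolding in_subfield_def by (metis mult.commute power_mult)

lemma in_subfield_frobenius_iff: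
  assumes "CHAR('a::field) = 2"
  shows "in_subfield k ((x :: 'a) ^ 2 ^ j) \<longleftrightarrow> in_subfield k x"
proof -
  have "(x ^ 2 ^ j) ^ 2 ^ k = (x ^ 2 ^ k) ^ 2 ^ j"
    by (metis mult.commute power_mult)
  then show ?thesis
    using frobenius_inj[OF assms, of "x ^ 2 ^ k" j x] by (auto simp: in_subfield_def)
qed

lemma in_subfield_mult_index:
  "in_subfield j x \<Longrightarrow> in_subfield (j * i) x"
proof (induction i)
  case (Suc i)
  then show ?case
    by (simp add: in_subfield_def power_add power_mult)
qed (simp add: in_subfield_def)

lemma in_subfield_gcd:
  assumes "in_subfield j x" and "in_subfield k x"
  shows "in_subfield (gcd j k) x"
proof (cases "j = 0")
  case False
  obtain a b where ab: "j * a = k * b + gcd j k"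
    using bezout_nat[OF False] by blast
  have "x = x ^ 2 ^ (j * a)"
    using in_subfield_mult_index[OF assms(1)] by (simp add: in_subfield_def)
  also have "\<dots> = (x ^ 2 ^ (k * b)) ^ 2 ^ gcd j k"
    by (simp add: ab power_add power_mult)
  also have "\<dots> = x ^ 2 ^ gcd j k"
    using in_subfield_mult_index[OF assms(2)] by (simp add: in_subfield_def)
  finally show ?thesis
    by (simp add: in_subfield_def)
qed (use assms in simp)

lemma in_subfield_1_iff: "in_subfield 1 (x :: 'a::field) \<longleftrightarrow> x = 0 \<or> x = 1"
proof -
  have "x ^ 2 = x \<longleftrightarrow> x * (x - 1) = 0"
    by (simp add: power2_eq_square algebra_simps)
  then show ?thesis
    by (auto simp: in_subfield_def)
qed

lemma in_subfield_power_eq_self: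
  assumes "in_subfield k t"
  shows "t ^ (i * (2 ^ k - 1) + 1) = t"
proof (cases "t = 0")
  case False
  have "t ^ (2 ^ k - 1) * t = t"
    using assms by (simp add: in_subfield_def flip: power_Suc2)
  then have "t ^ (2 ^ k - 1) = 1"
    using False by simp
  then show ?thesis
    by (simp add: power_add power_mult mult.commute[of i])
qed simp

section \<open>Traces\<close>

definition rel_tr :: "nat \<Rightarrow> 'a::field \<Rightarrow> 'a" where
  "rel_tr k x = x + x ^ 2 ^ k"

lemma rel_tr_add:
  assumes "CHAR('a::field) = 2"
  shows "rel_tr k ((x :: 'a) + y) = rel_tr k x + rel_tr k y"
  using assms by (simp add: rel_tr_def frobenius_add algebra_simps)

lemma rel_tr_mult_subfield:
  "in_subfield k t \<Longrightarrow> rel_tr k (t * x) = t * rel_tr k x"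
  by (simp add: rel_tr_def in_subfield_def power_mult_distrib algebra_simps)

lemma rel_tr_eq_0_iff:
  assumes "CHAR('a::field) = 2"
  shows "rel_tr k (x :: 'a) = 0 \<longleftrightarrow> in_subfield k x"
  using assms by (auto simp: rel_tr_def in_subfield_def char2_add_eq_0_iff)

lemma in_subfield_rel_tr:
  assumes "CHAR('a::field) = 2" and "in_subfield (2 * k) (x :: 'a)"
  shows "in_subfield k (rel_tr k x)"
  using assms by (simp add: in_subfield_def rel_tr_def frobenius_add mult_2 power_add power_mult add.commute)

lemma rel_tr_line:
  assumes "CHAR('a::field) = 2" and "in_subfield k t" and "in_subfield k z"
  shows "rel_tr k (t * ((z :: 'a) + \<gamma>)) = t * rel_tr k \<gamma>"
  using assms by (simp add: rel_tr_mult_subfield rel_tr_add rel_tr_eq_0_iff)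

lemma tr_0 [simp]: "tr m 0 = 0"
  by (simp add: tr_def power_0_left)

lemma tr_add:
  assumes "CHAR('a::field) = 2"
  shows "tr m ((x :: 'a) + y) = tr m x + tr m y"
  using assms by (simp add: tr_def frobenius_add sum.distrib)

lemma tr_double:
  assumes "CHAR('a::field) = 2"
  shows "tr (2 * k) (x :: 'a) = tr k (rel_tr k x)"
proof -
  have "tr (k + j) x = tr k x + (\<Sum>i<j. x ^ 2 ^ (k + i))" for j
    by (induction j) (simp_all add: tr_def)
  then have "tr (2 * k) x = tr k x + (\<Sum>i<k. x ^ 2 ^ (k + i))"
    by (simp add: mult_2)
  also have "(\<Sum>i<k. x ^ 2 ^ (k + i)) = tr k (x ^ 2 ^ k)"
    by (simp add: tr_def power_add power_mult)
  finally show ?thesis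
    using assms by (simp add: rel_tr_def tr_add)
qed

lemma tr_subfield_cases:
  assumes "CHAR('a::field) = 2" and "in_subfield k (x :: 'a)"
  shows "tr k x = 0 \<or> tr k x = 1"
proof -
  have "tr k x ^ 2 = (\<Sum>i<k. x ^ 2 ^ Suc i)"
    unfolding tr_def by (subst freshmans_dream_sum'[where n = 1]) (simp_all add: assms flip: power_mult power_Suc2)
  also have "\<dots> = tr k x"
    using assms(2) sum.lessThan_Suc_shift[of "\<lambda>i. x ^ 2 ^ i" k]
    by (simp add: tr_def in_subfield_def add.commute)
  finally have "tr k x * (tr k x - 1) = 0"
    by (simp add: power2_eq_square algebra_simps)
  then show ?thesis
    by simp
qed

lemma sgn2_add_1:
  assumes "CHAR('a::field) = 2" and "(y :: 'a) = 0 \<or> y = 1"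
  shows "sgn2 (y + 1) = - sgn2 y"
  using assms char2_add_self[OF assms(1), of 1] by (auto simp: sgn2_def)

section \<open>The field with \<open>2 ^ (2 * k)\<close> elements\<close>

lemma card_subfield_le:
  assumes "0 < k"
  shows "card {x :: 'a::field. in_subfield k x} \<le> 2 ^ k"
proof -
  define p :: "'a poly" where "p = monom 1 (2 ^ k) - monom 1 1"
  have "coeff p (2 ^ k) = 1"
    using one_less_power[of "2::nat" k] assms by (simp add: p_def)
  then have "p \<noteq> 0"
    by auto
  moreover have "degree p \<le> 2 ^ k"
    unfolding p_def by (rule order.trans[OF degree_diff_le_max]) (simp add: degree_monom_eq)
  moreover have "{x. poly p x = 0} = {x. in_subfield k x}"
    by (simp add: p_def poly_monom in_subfield_def)
  ultimately show ?thesis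
    using card_poly_roots_bound[of p] by simp
qed

lemma card_subfield:
  assumes card: "card (UNIV :: 'a::{field,finite} set) = 2 ^ (2 * k)"
  shows "card {x :: 'a. in_subfield k x} = 2 ^ k"
proof (cases "k = 0")
  case True
  then show ?thesis
    using card by (simp add: in_subfield_def)
next
  case False
  let ?K = "{x :: 'a. in_subfield k x}"
  let ?T = "rel_tr k :: 'a \<Rightarrow> 'a"
  let ?lift = "\<lambda>(c, y). inv ?T c + y"
  have char: "CHAR('a) = 2"
    using CHAR_eq_2_if_card_power2[OF card] .
  \<comment> \<open>The fibres of the \<open>K\<close>-valued map \<open>rel_tr k\<close> are cosets of its kernel \<open>K\<close>.\<close>
  have "x \<in> ?lift ` (?K \<times> ?K)" for x
  proof -
    have "?T (inv ?T (?T x)) = ?T x"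
      by (simp add: f_inv_into_f)
    then have "in_subfield k (inv ?T (?T x) + x)"
      by (simp add: rel_tr_add[OF char] char2_add_self[OF char] flip: rel_tr_eq_0_iff[OF char])
    moreover have "in_subfield k (?T x)"
      by (rule in_subfield_rel_tr[OF char in_subfield_of_card[OF card]])
    moreover have "x = inv ?T (?T x) + (inv ?T (?T x) + x)"
      by (simp add: char2_add_self[OF char] flip: add.assoc)
    ultimately show ?thesis
      by (intro image_eqI[of _ _ "(?T x, inv ?T (?T x) + x)"]) auto
  qed
  then have "card (UNIV :: 'a set) \<le> card (?lift ` (?K \<times> ?K))"
    by (intro card_mono) auto
  also have "\<dots> \<le> card ?K * card ?K"
    using card_image_le[of "?K \<times> ?K" ?lift] by (simp add: card_cartesian_product)
  finally have "(2 ^ k) ^ 2 \<le> (card ?K) ^ 2"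
    using card by (simp add: power2_eq_square power_mult mult.commute[of 2])
  then have "2 ^ k \<le> card ?K"
    by (rule power2_le_imp_le) simp
  with card_subfield_le[of k, where 'a = 'a] False show ?thesis
    by simp
qed

lemma ex_tr_eq_1:
  assumes card: "card (UNIV :: 'a::{field,finite} set) = 2 ^ (2 * k)" and "0 < k"
  shows "\<exists>t :: 'a. in_subfield k t \<and> tr k t = 1"
proof (rule ccontr)
  assume none: "\<not> ?thesis"
  define p :: "'a poly" where "p = (\<Sum>i<k. monom 1 (2 ^ i))"
  have "coeff p (2 ^ (k - 1)) = (\<Sum>i<k. if i = k - 1 then 1 else 0)"
    by (simp add: p_def coeff_sum)
  then have "coeff p (2 ^ (k - 1)) = 1"
    using \<open>0 < k\<close> by simp
  then have "p \<noteq> 0"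
    by auto
  moreover have "degree p \<le> 2 ^ (k - 1)"
    unfolding p_def
    by (intro degree_sum_le order.trans[OF degree_monom_le]) (auto intro: power_increasing)
  ultimately have roots: "card {x. poly p x = 0} \<le> 2 ^ (k - 1)"
    using card_poly_roots_bound[of p] by simp
  have "{x :: 'a. in_subfield k x} \<subseteq> {x. poly p x = 0}"
    using none tr_subfield_cases[OF CHAR_eq_2_if_card_power2[OF card]]
    by (auto simp: p_def poly_sum poly_monom tr_def)
  then have "2 ^ k \<le> card {x. poly p x = 0}"
    using card_subfield[OF card] card_mono[of "{x. poly p x = 0}" "{x. in_subfield k x}"] by simp
  from this roots have "(2::nat) ^ k \<le> 2 ^ (k - 1)"
    by (rule le_trans)
  then show False
    using \<open>0 < k\<close> by simp
qed

lemma sum_sgn2_tr_subfield_mult: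
  assumes card: "card (UNIV :: 'a::{field,finite} set) = 2 ^ (2 * k)" and "0 < k"
    and c: "in_subfield k (c :: 'a)"
  shows "(\<Sum>t | in_subfield k t. sgn2 (tr k (t * c))) = (if c = 0 then 2 ^ k else 0)"
proof (cases "c = 0")
  case True
  then show ?thesis
    using card_subfield[OF card] by (simp add: sgn2_def)
next
  case False
  let ?K = "{t :: 'a. in_subfield k t}"
  let ?S = "\<Sum>t\<in>?K. sgn2 (tr k t)"
  have char: "CHAR('a) = 2"
    using CHAR_eq_2_if_card_power2[OF card] .
  obtain t0 :: 'a where t0: "in_subfield k t0" "tr k t0 = 1"
    using ex_tr_eq_1[OF card \<open>0 < k\<close>] by blast
  have "?S = (\<Sum>t\<in>?K. sgn2 (tr k (t + t0)))"
    by (rule sum.reindex_bij_witness[of _ "\<lambda>t. t + t0" "\<lambda>t. t + t0"])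
      (auto simp: in_subfield_add[OF char] t0 add.assoc char2_add_self[OF char])
  also have "\<dots> = - ?S"
    by (simp add: sum_negf tr_add[OF char] t0 sgn2_add_1[OF char] tr_subfield_cases[OF char])
  finally have "?S = 0"
    by simp
  moreover have "(\<Sum>t\<in>?K. sgn2 (tr k (t * c))) = ?S"
    by (rule sum.reindex_bij_witness[of _ "\<lambda>t. t / c" "\<lambda>t. t * c"])
      (use False c in \<open>auto simp: in_subfield_mult in_subfield_divide\<close>)
  ultimately show ?thesis
    using False by simp
qed

lemma bij_betw_lines_off_subfield:
  assumes card: "card (UNIV :: 'a::{field,finite} set) = 2 ^ (2 * k)"
    and \<gamma>: "\<not> in_subfield k \<gamma>"
  shows "bij_betw (\<lambda>(t, z). t * (z + \<gamma>))
           (({t. in_subfield k t} - {0}) \<times> {z. in_subfield k z}) (- {x :: 'a. in_subfield k x})"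
proof -
  have char: "CHAR('a) = 2"
    using CHAR_eq_2_if_card_power2[OF card] .
  have T\<gamma>: "rel_tr k \<gamma> \<noteq> 0"
    using \<gamma> rel_tr_eq_0_iff[OF char] by blast
  \<comment> \<open>\<open>rel_tr k\<close> is \<open>K\<close>-linear and kills \<open>K\<close>, so it maps \<open>t * (z + \<gamma>)\<close> to \<open>t * rel_tr k \<gamma>\<close>.\<close>
  define scalar where "scalar x = rel_tr k x / rel_tr k \<gamma>" for x :: 'a
  have scalar_K: "in_subfield k (scalar x)" for x
    by (simp add: scalar_def in_subfield_divide in_subfield_rel_tr[OF char in_subfield_of_card[OF card]])
  have on_line: "scalar (t * (z + \<gamma>)) = t" "t * (z + \<gamma>) / scalar (t * (z + \<gamma>)) + \<gamma> = z"
      "\<not> in_subfield k (t * (z + \<gamma>))"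
    if "in_subfield k t" "t \<noteq> 0" "in_subfield k z" for t z
  proof -
    show scalar_t: "scalar (t * (z + \<gamma>)) = t"
      using that T\<gamma> by (simp add: scalar_def rel_tr_line[OF char])
    show "t * (z + \<gamma>) / scalar (t * (z + \<gamma>)) + \<gamma> = z"
      using that by (simp add: scalar_t add.assoc char2_add_self[OF char])
    show "\<not> in_subfield k (t * (z + \<gamma>))"
      using that T\<gamma> rel_tr_eq_0_iff[OF char, of k "t * (z + \<gamma>)"] by (simp add: rel_tr_line[OF char])
  qed
  have off_subfield: "scalar x \<noteq> 0" "in_subfield k (x / scalar x + \<gamma>)"
      "scalar x * (x / scalar x + \<gamma> + \<gamma>) = x"
    if "\<not> in_subfield k x" for x
  proof -
    show nonzero: "scalar x \<noteq> 0"
      using that T\<gamma> by (simp add: scalar_def rel_tr_eq_0_iff[OF char])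
    have "rel_tr k (x / scalar x) = inverse (scalar x) * rel_tr k x"
      using scalar_K[of x]
      by (simp add: divide_inverse_commute rel_tr_mult_subfield in_subfield_def power_inverse)
    also have "\<dots> = rel_tr k \<gamma>"
      using nonzero by (simp add: scalar_def)
    finally show "in_subfield k (x / scalar x + \<gamma>)"
      by (simp add: rel_tr_add[OF char] char2_add_self[OF char] flip: rel_tr_eq_0_iff[OF char])
    show "scalar x * (x / scalar x + \<gamma> + \<gamma>) = x"
      using nonzero by (simp only: add.assoc char2_add_self[OF char] add_0_right) simp
  qed
  let ?A = "({t. in_subfield k t} - {0}) \<times> {z. in_subfield k z}"
  let ?f = "\<lambda>(t, z). t * (z + \<gamma>)"
  let ?g = "\<lambda>x. (scalar x, x / scalar x + \<gamma>)"
  show ?thesis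
  proof (rule bij_betw_byWitness[where f' = ?g])
    show "\<forall>p\<in>?A. ?g (?f p) = p"
      using on_line(1,2) by auto
    show "\<forall>x\<in>- {x. in_subfield k x}. ?f (?g x) = x"
      using off_subfield(3) by simp
    show "?f ` ?A \<subseteq> - {x. in_subfield k x}"
      using on_line(3) by auto
    show "?g ` (- {x. in_subfield k x}) \<subseteq> ?A"
      using off_subfield(1,2) scalar_K by auto
  qed
qed

lemma sum_sgn2_tr_homogeneous:
  fixes c :: "'a::{field,finite} \<Rightarrow> 'a"
  assumes card: "card (UNIV :: 'a set) = 2 ^ (2 * k)" and "0 < k"
    and \<gamma>: "\<not> in_subfield k \<gamma>"
    and c_K: "\<And>x. in_subfield k (c x)"
    and c_hom: "\<And>t x. in_subfield k t \<Longrightarrow> c (t * x) = t * c x"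
  shows "(\<Sum>x\<in>UNIV. sgn2 (tr k (c x)))
    = 2 ^ k * (of_bool (c 1 = 0) + int (card {z. in_subfield k z \<and> c (z + \<gamma>) = 0})) - 2 ^ k"
proof -
  let ?K = "{t :: 'a. in_subfield k t}"
  let ?\<chi> = "\<lambda>x. sgn2 (tr k (c x))"
  have along_line: "(\<Sum>t\<in>?K. ?\<chi> (t * x)) = (if c x = 0 then 2 ^ k else 0)" for x
    using sum_sgn2_tr_subfield_mult[OF card \<open>0 < k\<close> c_K] by (simp add: c_hom)
  have "(\<Sum>x\<in>UNIV. ?\<chi> x) = (\<Sum>x\<in>?K. ?\<chi> x) + (\<Sum>x\<in>- ?K. ?\<chi> x)"
    by (subst sum.union_disjoint[symmetric]) (auto intro: sum.cong)
  also have "(\<Sum>x\<in>?K. ?\<chi> x) = (if c 1 = 0 then 2 ^ k else 0)"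
    using along_line[of 1] by simp
  also have "(\<Sum>x\<in>- ?K. ?\<chi> x) = (\<Sum>(t, z)\<in>(?K - {0}) \<times> ?K. ?\<chi> (t * (z + \<gamma>)))"
    using sum.reindex_bij_betw[OF bij_betw_lines_off_subfield[OF card \<gamma>], of ?\<chi>]
    by (simp add: case_prod_unfold)
  also have "\<dots> = (\<Sum>z\<in>?K. \<Sum>t\<in>?K - {0}. ?\<chi> (t * (z + \<gamma>)))"
    by (simp add: sum.cartesian_product[symmetric] sum.swap[of _ "?K - {0}"])
  also have "\<dots> = (\<Sum>z\<in>?K. (if c (z + \<gamma>) = 0 then 2 ^ k else 0) - 1)"
  proof (rule sum.cong)
    fix z
    have "?\<chi> (0 * (z + \<gamma>)) = 1"
      using c_hom[OF in_subfield_0] by (simp add: sgn2_def)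
    then show "(\<Sum>t\<in>?K - {0}. ?\<chi> (t * (z + \<gamma>))) = (if c (z + \<gamma>) = 0 then 2 ^ k else 0) - 1"
      using along_line[of "z + \<gamma>"] sum.remove[of ?K 0 "\<lambda>t. ?\<chi> (t * (z + \<gamma>))"] by simp
  qed simp
  also have "\<dots> = 2 ^ k * int (card {z. in_subfield k z \<and> c (z + \<gamma>) = 0}) - 2 ^ k"
    by (simp add: sum_subtractf sum.If_cases card_subfield[OF card] Int_def conj_commute)
  finally show ?thesis
    by (simp add: algebra_simps)
qed

section \<open>Affine linearized polynomials over the subfield\<close>

lemma bij_betw_frobenius_subfield:
  assumes "CHAR('a::{field,finite}) = 2"
  shows "bij_betw (\<lambda>z. z ^ 2 ^ j) {z :: 'a. in_subfield k z} {z. in_subfield k z}"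
proof -
  have "inj_on (\<lambda>z :: 'a. z ^ 2 ^ j) {z. in_subfield k z}"
    using frobenius_inj[OF assms] by (auto intro: inj_onI)
  moreover have "(\<lambda>z. z ^ 2 ^ j) ` {z :: 'a. in_subfield k z} \<subseteq> {z. in_subfield k z}"
    using in_subfield_power by blast
  ultimately show ?thesis
    by (simp add: bij_betw_def endo_inj_surj)
qed

lemma bij_betw_power_pred_subfield:
  assumes "coprime j k"
  shows "bij_betw (\<lambda>z. z ^ (2 ^ j - 1))
           ({z :: 'a::{field,finite}. in_subfield k z} - {0}) ({z. in_subfield k z} - {0})"
proof -
  have fixed_1: "t = 1" if "in_subfield k t" "t \<noteq> 0" "t ^ (2 ^ j - 1) = (1 :: 'a)" for t
  proof -
    have "t ^ 2 ^ j = t ^ Suc (2 ^ j - 1)"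
      by simp
    then have "in_subfield j t"
      unfolding in_subfield_def by (simp only: power_Suc2 that(3) mult_1_left)
    then have "in_subfield 1 t"
      using in_subfield_gcd[OF _ that(1), of j] assms by (simp add: coprime_iff_gcd_eq_1)
    then show ?thesis
      using that(2) in_subfield_1_iff[of t] by simp
  qed
  have "inj_on (\<lambda>z. z ^ (2 ^ j - 1)) ({z :: 'a. in_subfield k z} - {0})"
  proof (rule inj_onI)
    fix x y :: 'a
    assume x: "x \<in> {z. in_subfield k z} - {0}" and y: "y \<in> {z. in_subfield k z} - {0}"
      and eq: "x ^ (2 ^ j - 1) = y ^ (2 ^ j - 1)"
    have "in_subfield k (x / y)"
      using x y by (simp add: in_subfield_divide)
    moreover have "x / y \<noteq> 0"
      using x y by simp
    moreover have "(x / y) ^ (2 ^ j - 1) = 1"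
      using eq y by (simp add: power_divide)
    ultimately have "x / y = 1"
      by (rule fixed_1)
    then show "x = y"
      using y by simp
  qed
  moreover have "(\<lambda>z. z ^ (2 ^ j - 1)) ` ({z :: 'a. in_subfield k z} - {0}) \<subseteq> {z. in_subfield k z} - {0}"
    by (rule image_subsetI) (simp add: in_subfield_power)
  ultimately show ?thesis
    by (simp add: bij_betw_def endo_inj_surj)
qed

lemma linearized_kernel_subfield:
  fixes C D :: "'a::{field,finite}"
  assumes char: "CHAR('a) = 2" and "coprime j k"
    and C: "in_subfield k C" "C \<noteq> 0" and D: "in_subfield k D" "D \<noteq> 0"
  obtains y0 where "y0 \<noteq> 0" and "{y. in_subfield k y \<and> C * y + D * y ^ 2 ^ j = 0} = {0, y0}"
proof -
  let ?P = "\<lambda>y :: 'a. y ^ (2 ^ j - 1)"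
  have bij: "bij_betw ?P ({y. in_subfield k y} - {0}) ({y. in_subfield k y} - {0})"
    by (rule bij_betw_power_pred_subfield[OF \<open>coprime j k\<close>])
  have "C / D \<in> ?P ` ({y. in_subfield k y} - {0})"
    using C D bij_betw_imp_surj_on[OF bij] by (simp add: in_subfield_divide)
  then obtain y0 where "y0 \<in> {y. in_subfield k y} - {0}" and "C / D = ?P y0"
    by (rule imageE)
  then have y0: "in_subfield k y0" "y0 \<noteq> 0" "?P y0 = C / D"
    by simp_all
  have "C * y + D * y ^ 2 ^ j = 0 \<longleftrightarrow> y = y0"
    if "in_subfield k y" "y \<noteq> 0" for y
  proof -
    have "y ^ 2 ^ j = ?P y * y"
      by (simp flip: power_Suc2)
    then have "C * y + D * y ^ 2 ^ j = (C + D * ?P y) * y"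
      by (simp add: algebra_simps)
    also have "\<dots> = 0 \<longleftrightarrow> ?P y = ?P y0"
      using \<open>y \<noteq> 0\<close> D y0(3) by (auto simp: char2_add_eq_0_iff[OF char] field_simps)
    also have "\<dots> \<longleftrightarrow> y = y0"
      using inj_onD[OF bij_betw_imp_inj_on[OF bij], of y y0] that y0(1,2) by auto
    finally show ?thesis .
  qed
  then have "{y. in_subfield k y \<and> C * y + D * y ^ 2 ^ j = 0} = {0, y0}"
    using y0 by (auto simp: power_0_left)
  then show ?thesis
    using that y0(2) by blast
qed

lemma card_roots_affine_linearized_eq_card_kernel:
  assumes char: "CHAR('a::{field,finite}) = 2"
    and z1: "in_subfield k z1" "C * z1 + D * z1 ^ 2 ^ j + E = (0 :: 'a)"
  shows "card {z. in_subfield k z \<and> C * z + D * z ^ 2 ^ j + E = 0}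
    = card {y. in_subfield k y \<and> C * y + D * y ^ 2 ^ j = 0}"
proof -
  let ?L = "\<lambda>z :: 'a. C * z + D * z ^ 2 ^ j"
  let ?ker = "{y. in_subfield k y \<and> ?L y = 0}"
  have L_add: "?L (z + y) = ?L z + ?L y" for z y
    by (simp add: frobenius_add[OF char] algebra_simps)
  have "{z. in_subfield k z \<and> ?L z + E = 0} = (+) z1 ` ?ker"
  proof (intro equalityI subsetI)
    fix z
    assume "z \<in> {z. in_subfield k z \<and> ?L z + E = 0}"
    then have "z1 + z \<in> ?ker"
      using z1 L_add[of z1 z] char2_add_eq_0_iff[OF char]
      by (simp add: in_subfield_add[OF char] char2_add_self[OF char])
    moreover have "z = z1 + (z1 + z)"
      by (simp add: char2_add_self[OF char] flip: add.assoc)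
    ultimately show "z \<in> (+) z1 ` ?ker"
      by blast
  next
    fix z
    assume "z \<in> (+) z1 ` ?ker"
    then obtain y where "y \<in> ?ker" "z = z1 + y"
      by blast
    then show "z \<in> {z. in_subfield k z \<and> ?L z + E = 0}"
      using z1 L_add[of z1 y] by (simp add: in_subfield_add[OF char])
  qed
  then show ?thesis
    by (simp add: card_image)
qed

lemma card_roots_affine_linearized:
  assumes char: "CHAR('a::{field,finite}) = 2" and "coprime j k"
    and C: "in_subfield k C" and D: "in_subfield k D" "D \<noteq> 0" and E: "in_subfield k E"
  shows "of_bool (C = 0) + card {z :: 'a. in_subfield k z \<and> C * z + D * z ^ 2 ^ j + E = 0} \<in> {0, 2}"
proof (cases "C = 0")
  case True
  have "E / D \<in> (\<lambda>z. z ^ 2 ^ j) ` {z. in_subfield k z}"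
    using bij_betw_imp_surj_on[OF bij_betw_frobenius_subfield[OF char, of j k]] D E
    by (simp add: in_subfield_divide)
  then obtain z1 where z1: "in_subfield k z1" "E / D = z1 ^ 2 ^ j"
    by auto
  have "C * z1 + D * z1 ^ 2 ^ j + E = 0"
    using True D(2) by (simp add: z1(2)[symmetric] char2_add_self[OF char])
  from card_roots_affine_linearized_eq_card_kernel[OF char z1(1) this]
  have "card {z. in_subfield k z \<and> C * z + D * z ^ 2 ^ j + E = 0}
    = card {y. in_subfield k y \<and> C * y + D * y ^ 2 ^ j = 0}" .
  also have "{y. in_subfield k y \<and> C * y + D * y ^ 2 ^ j = 0} = {0}"
    using True D by (auto simp: power_0_left)
  finally show ?thesis
    using True by simp
next
  case False
  obtain y0 where "y0 \<noteq> 0" "{y. in_subfield k y \<and> C * y + D * y ^ 2 ^ j = 0} = {0, y0}"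
    using linearized_kernel_subfield[OF char \<open>coprime j k\<close> C False D] by blast
  then have kernel: "card {y. in_subfield k y \<and> C * y + D * y ^ 2 ^ j = 0} = 2"
    by simp
  show ?thesis
  proof (cases "{z. in_subfield k z \<and> C * z + D * z ^ 2 ^ j + E = 0} = {}")
    case False
    then obtain z1 where "in_subfield k z1" "C * z1 + D * z1 ^ 2 ^ j + E = 0"
      by blast
    from card_roots_affine_linearized_eq_card_kernel[OF char this]
    show ?thesis
      using \<open>C \<noteq> 0\<close> kernel by simp
  qed (use \<open>C \<noteq> 0\<close> in simp)
qed

section \<open>The function \<open>G\<close>\<close>

locale power_sum_G =
  fixes k r :: nat and G :: "'a::{field,finite} \<Rightarrow> 'a"
  assumes card_UNIV: "card (UNIV :: 'a set) = 2 ^ (2 * k)"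
    and r_pos: "0 < r" and r_less: "r < k"
    and G_eq: "\<And>x. G x = (\<Sum>i=1..2^r - 1. x ^ ((i * 2 ^ (k - r) + 1) * (2 ^ k - 1) + 1))"
begin

lemma char: "CHAR('a) = 2"
  by (rule CHAR_eq_2_if_card_power2[OF card_UNIV])

lemma G_homogeneous:
  assumes "in_subfield k t"
  shows "G (t * x) = t * G x"
proof -
  have "(t * x) ^ ((i * 2 ^ (k - r) + 1) * (2 ^ k - 1) + 1) = t * x ^ ((i * 2 ^ (k - r) + 1) * (2 ^ k - 1) + 1)"
    for i
    using in_subfield_power_eq_self[OF assms, of "i * 2 ^ (k - r) + 1"] by (simp only: power_mult_distrib)
  then show ?thesis
    by (simp only: G_eq sum_distrib_left)
qed

lemma G_one: "G 1 = 1"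
  using char2_of_nat_odd[OF char, of "2 ^ r - 1"] r_pos by (simp add: G_eq)

lemma G_eq_geometric: "G x = x ^ 2 ^ k * (\<Sum>i=1..2 ^ r - 1. (x ^ (2 ^ (k - r) * (2 ^ k - 1))) ^ i)"
proof -
  have "x ^ ((i * 2 ^ (k - r) + 1) * (2 ^ k - 1) + 1) = x ^ 2 ^ k * (x ^ (2 ^ (k - r) * (2 ^ k - 1))) ^ i"
    for i
  proof -
    have "(a + 1) * (q - 1) + 1 = q + a * (q - 1)" if "0 < q" for a q :: nat
      using that by (cases q) (simp_all add: algebra_simps)
    from this[of "2 ^ k" "i * 2 ^ (k - r)"]
    have "(i * 2 ^ (k - r) + 1) * (2 ^ k - 1) + 1 = 2 ^ k + 2 ^ (k - r) * (2 ^ k - 1) * i"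
      by (simp add: ac_simps)
    then show ?thesis
      by (simp only: power_add power_mult)
  qed
  then show ?thesis
    by (simp only: G_eq sum_distrib_left)
qed

lemma G_mult_rel_tr: "G x * rel_tr k (x ^ 2 ^ (k - r)) = rel_tr k (x ^ (2 ^ (k - r) + 1))"
proof -
  define m :: nat where "m = 2 ^ (k - r)"
  define s :: nat where "s = 2 ^ r"
  obtain Q where Q: "2 ^ k = Suc Q"
    using not0_implies_Suc[of "2 ^ k"] by auto
  have ms: "m * s = Suc Q"
    using r_less by (simp add: m_def s_def Q flip: power_add)
  define w where "w = x ^ (m * Q)"
  have T_form: "rel_tr k (x ^ m) = x ^ m * (1 + w)"
    by (simp add: rel_tr_def Q w_def algebra_simps flip: power_mult power_add)
  have geometric: "(1 + w) * (\<Sum>i=1..s - 1. w ^ i) = w + w ^ s"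
    using char2_geometric_sum[OF char, of w "s - 1"] by (simp add: s_def)
  have high: "x ^ Suc Q * x ^ m * w = (x ^ (m + 1)) ^ Suc Q"
    by (simp add: w_def algebra_simps flip: power_mult power_add)
  have "m * Q * s = Q * Suc Q"
    by (metis ms mult.commute mult.left_commute)
  moreover have "2 ^ (2 * k) = Suc Q * Suc Q"
    by (metis Q mult_2 power_add)
  ultimately have "Suc Q + m + m * Q * s = 2 ^ (2 * k) + m"
    by simp
  then have "x ^ Suc Q * x ^ m * w ^ s = x ^ (2 ^ (2 * k)) * x ^ m"
    by (simp only: w_def flip: power_mult power_add)
  also have "\<dots> = x ^ (m + 1)"
    using in_subfield_of_card[OF card_UNIV, of x] by (simp add: in_subfield_def)
  finally have low: "x ^ Suc Q * x ^ m * w ^ s = x ^ (m + 1)" .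
  have "G x * rel_tr k (x ^ m) = x ^ Suc Q * x ^ m * ((1 + w) * (\<Sum>i=1..s - 1. w ^ i))"
    unfolding G_eq_geometric T_form by (simp only: Q diff_Suc_1 m_def s_def w_def mult_ac)
  also have "\<dots> = x ^ Suc Q * x ^ m * w + x ^ Suc Q * x ^ m * w ^ s"
    by (simp only: geometric distrib_left)
  also have "\<dots> = rel_tr k (x ^ (m + 1))"
    by (simp only: high low rel_tr_def Q add.commute)
  finally show ?thesis
    by (simp only: m_def)
qed

lemma in_subfield_2k: "in_subfield (2 * k) (x :: 'a)"
  by (rule in_subfield_of_card[OF card_UNIV])

lemma G_in_subfield: "in_subfield k (G x)"
proof (cases "in_subfield k x")
  case True
  then show ?thesis
    using G_homogeneous[OF True, of 1] G_one by simp
next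
  case False
  have "rel_tr k (x ^ 2 ^ (k - r)) \<noteq> 0"
    using False by (simp add: rel_tr_eq_0_iff[OF char] in_subfield_frobenius_iff[OF char])
  then have "G x = rel_tr k (x ^ (2 ^ (k - r) + 1)) / rel_tr k (x ^ 2 ^ (k - r))"
    using G_mult_rel_tr[of x] by (simp add: eq_divide_eq)
  then show ?thesis
    by (simp add: in_subfield_divide in_subfield_rel_tr[OF char in_subfield_2k])
qed

lemma G_on_line:
  assumes z: "in_subfield k z"
  shows "rel_tr k (\<gamma> ^ 2 ^ (k - r)) * G (z + \<gamma>)
    = rel_tr k (\<gamma> ^ 2 ^ (k - r)) * z + rel_tr k \<gamma> * z ^ 2 ^ (k - r) + rel_tr k (\<gamma> ^ (2 ^ (k - r) + 1))"
proof -
  let ?m = "2 ^ (k - r) :: nat"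
  let ?T = "rel_tr k"
  have zm: "in_subfield k (z ^ ?m)"
    using z by (rule in_subfield_power)
  have T_vanishes: "?T y = 0" if "in_subfield k y" for y :: 'a
    using that rel_tr_eq_0_iff[OF char] by blast
  have low: "?T ((z + \<gamma>) ^ ?m) = ?T (\<gamma> ^ ?m)"
    using T_vanishes[OF zm] by (simp add: frobenius_add[OF char] rel_tr_add[OF char])
  have "(z + \<gamma>) ^ (?m + 1) = z ^ ?m * z + (z ^ ?m * \<gamma> + (z * \<gamma> ^ ?m + \<gamma> ^ (?m + 1)))"
    by (simp add: frobenius_add[OF char] algebra_simps)
  then have high: "?T ((z + \<gamma>) ^ (?m + 1)) = z ^ ?m * ?T \<gamma> + z * ?T (\<gamma> ^ ?m) + ?T (\<gamma> ^ (?m + 1))"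
    using T_vanishes[OF in_subfield_mult[OF zm z]]
    by (simp add: rel_tr_add[OF char] rel_tr_mult_subfield[OF zm] rel_tr_mult_subfield[OF z] add.assoc)
  show ?thesis
    using G_mult_rel_tr[of "z + \<gamma>"] low high by (simp add: algebra_simps)
qed

lemma card_zeros_on_lines:
  assumes "coprime r k" and l: "in_subfield k l" "l \<noteq> 0" and \<gamma>: "\<not> in_subfield k \<gamma>"
  shows "of_bool (l * G 1 + rel_tr k a = 0)
    + card {z. in_subfield k z \<and> l * G (z + \<gamma>) + rel_tr k (a * (z + \<gamma>)) = 0} \<in> {0, 2}"
proof -
  let ?m = "2 ^ (k - r) :: nat"
  let ?T = "rel_tr k"
  let ?c = "\<lambda>x. l * G x + ?T (a * x)"
  define C where "C = (l + ?T a) * ?T (\<gamma> ^ ?m)"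
  define D where "D = l * ?T \<gamma>"
  define E where "E = l * ?T (\<gamma> ^ (?m + 1)) + ?T (\<gamma> ^ ?m) * ?T (a * \<gamma>)"
  have T_K: "in_subfield k (?T y)" for y :: 'a
    by (rule in_subfield_rel_tr[OF char in_subfield_2k])
  have T\<gamma>: "?T \<gamma> \<noteq> 0" and T\<delta>: "?T (\<gamma> ^ ?m) \<noteq> 0"
    using \<gamma> by (simp_all add: rel_tr_eq_0_iff[OF char] in_subfield_frobenius_iff[OF char])
  have line: "?T (\<gamma> ^ ?m) * ?c (z + \<gamma>) = C * z + D * z ^ ?m + E" if "in_subfield k z" for z
  proof -
    have "?T (a * (z + \<gamma>)) = z * ?T a + ?T (a * \<gamma>)"
      using rel_tr_mult_subfield[OF that, of a] by (simp add: distrib_left rel_tr_add[OF char] mult.commute)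
    then show ?thesis
      using G_on_line[OF that, of \<gamma>] by (simp add: C_def D_def E_def algebra_simps)
  qed
  have "?c (z + \<gamma>) = 0 \<longleftrightarrow> C * z + D * z ^ ?m + E = 0" if "in_subfield k z" for z
    using T\<delta> by (simp flip: line[OF that])
  then have "{z. in_subfield k z \<and> ?c (z + \<gamma>) = 0} = {z. in_subfield k z \<and> C * z + D * z ^ ?m + E = 0}"
    by blast
  moreover have "l * G 1 + ?T a = 0 \<longleftrightarrow> C = 0"
    using T\<delta> by (simp add: C_def G_one)
  moreover have "coprime (k - r) k"
    using \<open>coprime r k\<close> r_less by (simp add: coprime_iff_gcd_eq_1 gcd_diff2_nat)
  then have "of_bool (C = 0) + card {z. in_subfield k z \<and> C * z + D * z ^ ?m + E = 0} \<in> {0, 2}"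
    by (rule card_roots_affine_linearized[OF char])
      (use l T\<gamma> T_K in \<open>simp_all add: C_def D_def E_def in_subfield_add[OF char] in_subfield_mult\<close>)
  ultimately show ?thesis
    by simp
qed

lemma abs_sum_sgn2_tr_G:
  assumes "coprime r k" and l: "in_subfield k l" "l \<noteq> 0"
  shows "\<bar>\<Sum>x\<in>UNIV. sgn2 (tr k (l * G x) + tr (2 * k) (a * x))\<bar> = 2 ^ k"
proof -
  let ?c = "\<lambda>x. l * G x + rel_tr k (a * x)"
  have "0 < k"
    using r_pos r_less by simp
  obtain \<gamma> :: 'a where \<gamma>: "\<not> in_subfield k \<gamma>"
  proof -
    have "card {x :: 'a. in_subfield k x} \<noteq> card (UNIV :: 'a set)"
      using card_subfield[OF card_UNIV] card_UNIV \<open>0 < k\<close> by simp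
    then show ?thesis
      using that by force
  qed
  let ?N = "of_bool (?c 1 = 0) + int (card {z. in_subfield k z \<and> ?c (z + \<gamma>) = 0})"
  have "(\<Sum>x\<in>UNIV. sgn2 (tr k (l * G x) + tr (2 * k) (a * x))) = (\<Sum>x\<in>UNIV. sgn2 (tr k (?c x)))"
    by (simp add: tr_add[OF char] tr_double[OF char])
  also have "\<dots> = 2 ^ k * ?N - 2 ^ k"
  proof (rule sum_sgn2_tr_homogeneous[OF card_UNIV \<open>0 < k\<close> \<gamma>])
    show "in_subfield k (?c x)" for x
      using l by (simp add: in_subfield_add[OF char] in_subfield_mult G_in_subfield
          in_subfield_rel_tr[OF char in_subfield_2k])
    show "?c (t * x) = t * ?c x" if "in_subfield k t" for t x
      using rel_tr_mult_subfield[OF that, of "a * x"] by (simp add: G_homogeneous[OF that] mult.left_commute distrib_left)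
  qed
  finally have "(\<Sum>x\<in>UNIV. sgn2 (tr k (l * G x) + tr (2 * k) (a * x))) = 2 ^ k * ?N - 2 ^ k" .
  moreover have "?N = 0 \<or> ?N = 2"
    using card_zeros_on_lines[OF assms \<gamma>, of a] by (cases "?c 1 = 0") auto
  moreover have "\<bar>2 ^ k * N - 2 ^ k\<bar> = (2 ^ k :: int)" if "N = 0 \<or> N = 2" for N :: int
    using that by auto
  ultimately show ?thesis
    by presburger
qed

end

theorem proposition2:
  fixes n k r :: nat
    and G :: "'a::{field,finite} \<Rightarrow> 'a"
  assumes card: "card (UNIV :: 'a set) = 2 ^ n"
    and nk: "n = 2 * k"
    and r1: "1 < r" and rk: "r < k"
    and cop: "coprime r k"
    and G_def: "\<And>x. G x = (\<Sum>i=1..2^r - 1. x ^ ((i * 2 ^ (k - r) + 1) * (2 ^ k - 1) + 1))"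
  shows "(\<forall>x. in_subfield k (G x)) \<and> vectorial_bent n k G"
proof -
  interpret power_sum_G k r G
    using card nk r1 rk G_def by unfold_locales simp_all
  show ?thesis
    unfolding vectorial_bent_def nk using G_in_subfield abs_sum_sgn2_tr_G[OF cop] by simp
qed

end
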